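(* Let $A$ be an $n\times n$ matrix with a designated set of large positions, and let $(X,Y)$ be a restriction with $m=|X|\ge2$ that is $q$-good for some $q<\frac{1}{m(m-1)}$. Then $(X,Y)$ has a $0$-strong line, i.e. a row $i\in X$ with $(i,j)$ large for all $j\in Y$, or a column $j\in Y$ with $(i,j)$ large for all $i\in X$.
   Context: Let $A=(a_{ij})_{i,j\in[n]}$ with a designated set $L\subseteq[n]\times[n]$ of large positions. A restriction is $(X,Y)$ with $X,Y\subseteq[n]$, $|X|=|Y|$; a generalized diagonal of $A[X,Y]$ is $\{(i,\sigma(i)):i\in X\}$ for a bijection $\sigma:X\to Y$, random meaning uniform $\sigma$; it is good if it contains exactly one large position; $(X,Y)$ is $q$-good if a random generalized diagonal is good with probability $\ge1-q$. *)

theory Defs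
  imports Complex_Main "HOL-Library.FuncSet"
begin

definition gen_diags :: "nat set \<Rightarrow> nat set \<Rightarrow> (nat \<Rightarrow> nat) set" where
  "gen_diags X Y = {\<sigma> \<in> X \<rightarrow>\<^sub>E Y. bij_betw \<sigma> X Y}"

definition good_diag :: "(nat \<times> nat) set \<Rightarrow> nat set \<Rightarrow> (nat \<Rightarrow> nat) \<Rightarrow> bool" where
  "good_diag L X \<sigma> \<longleftrightarrow> card {i \<in> X. (i, \<sigma> i) \<in> L} = 1"

definition q_good :: "(nat \<times> nat) set \<Rightarrow> real \<Rightarrow> nat set \<Rightarrow> nat set \<Rightarrow> bool" where
  "q_good L q X Y \<longleftrightarrow>
     real (card {\<sigma> \<in> gen_diags X Y. good_diag L X \<sigma>}) / real (card (gen_diags X Y)) \<ge> 1 - q"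

end

theory Submission
  imports Defs "HOL-Combinatorics.Permutations"
begin

(* Suppose (X,Y), with m = |X| = |Y| >= 2, has no 0-strong line.
   We show that at least (m-2)! of the m! generalized diagonals are bad, so a
   random diagonal is good with probability at most 1 - 1/(m(m-1)), which
   contradicts q-goodness for q < 1/(m(m-1)).
   If there is no large position at all, every diagonal is bad.  Otherwise
   pick a large (i,j); since row i and column j are not full, there are small
   positions (i,j') and (i',j).  Every diagonal tau of the restriction
   (X - {i,i'}, Y - {j,j'}) extends in two ways, by i |-> j, i' |-> j' or by
   i |-> j', i' |-> j.  If the second extension is good, the first contains its
   unique large position and additionally (i,j), hence is bad.  Choosing a bad
   extension for each tau is injective, giving (m-2)! bad diagonals. *)

text \<open>Diagonals of an m-by-m restriction correspond to permutations of X
  (compose with a fixed bijection Y -> X), so there are m! of them.\<close>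

lemma card_gen_diags:
  assumes "finite X" "finite Y" "card X = card Y"
  shows "card (gen_diags X Y) = fact (card X)"
proof -
  obtain h where h: "bij_betw h Y X" using finite_same_card_bij assms by metis
  define g where "g = inv_into Y h"
  have g: "bij_betw g X Y" unfolding g_def by (rule bij_betw_inv_into[OF h])
  define to_perm where "to_perm = (\<lambda>\<sigma>. \<lambda>x. if x \<in> X then h (\<sigma> x) else x)"
  define of_perm where "of_perm = (\<lambda>p. restrict (\<lambda>x. g (p x)) X)"
  have "bij_betw to_perm (gen_diags X Y) {p. p permutes X}"
  proof (rule bij_betw_byWitness[where f' = of_perm])
    show "\<forall>\<sigma>\<in>gen_diags X Y. of_perm (to_perm \<sigma>) = \<sigma>"
      using h unfolding of_perm_def to_perm_def g_def gen_diags_def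
      by (auto simp: PiE_def extensional_def bij_betw_def inv_into_f_f Pi_iff fun_eq_iff)
    show "\<forall>p\<in>{p. p permutes X}. to_perm (of_perm p) = p"
    proof
      fix p assume p: "p \<in> {p. p permutes X}"
      have "to_perm (of_perm p) x = p x" for x
      proof (cases "x \<in> X")
        case True
        then have "p x \<in> X" using p permutes_in_image[of p X x] by auto
        then show ?thesis using True h unfolding of_perm_def to_perm_def g_def
          by (simp add: bij_betw_def f_inv_into_f)
      qed (use p in \<open>auto simp: to_perm_def permutes_def\<close>)
      then show "to_perm (of_perm p) = p" by blast
    qed
    show "to_perm ` gen_diags X Y \<subseteq> {p. p permutes X}"
    proof
      fix p assume "p \<in> to_perm ` gen_diags X Y"
      then obtain \<sigma> where \<sigma>: "\<sigma> \<in> gen_diags X Y" and p: "p = to_perm \<sigma>" by auto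
      have "bij_betw (h \<circ> \<sigma>) X X"
        using \<sigma> h unfolding gen_diags_def by (auto intro: bij_betw_trans)
      then have "bij_betw p X X"
        unfolding p to_perm_def by (rule bij_betw_cong[THEN iffD1, rotated]) auto
      then show "p \<in> {p. p permutes X}" by (auto intro!: bij_imp_permutes simp: p to_perm_def)
    qed
    show "of_perm ` {p. p permutes X} \<subseteq> gen_diags X Y"
    proof
      fix \<sigma> assume "\<sigma> \<in> of_perm ` {p. p permutes X}"
      then obtain p where p: "p permutes X" and \<sigma>: "\<sigma> = of_perm p" by auto
      have "bij_betw (g \<circ> p) X Y" using p g by (auto intro: bij_betw_trans permutes_imp_bij)
      then have "bij_betw \<sigma> X Y"
        unfolding \<sigma> of_perm_def by (rule bij_betw_cong[THEN iffD1, rotated]) auto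
      moreover have "\<sigma> \<in> X \<rightarrow>\<^sub>E Y"
        using \<open>bij_betw \<sigma> X Y\<close> unfolding \<sigma> of_perm_def by (auto simp: bij_betw_def)
      ultimately show "\<sigma> \<in> gen_diags X Y" unfolding gen_diags_def by auto
    qed
  qed
  then have "card (gen_diags X Y) = card {p. p permutes X}" by (rule bij_betw_same_card)
  also have "\<dots> = fact (card X)" using card_permutations assms by blast
  finally show ?thesis .
qed

lemma finite_gen_diags:
  assumes "finite X" "finite Y"
  shows "finite (gen_diags X Y)"
  using finite_PiE[OF assms(1), of "\<lambda>_. Y"] assms(2) unfolding gen_diags_def by simp

lemma fact_split_two:
  assumes "m \<ge> 2"
  shows "real (fact m) = real m * (real m - 1) * real (fact (m - 2))"
proof -
  obtain k where "m = Suc (Suc k)" using assms by (metis add_2_eq_Suc le_Suc_ex)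
  then show ?thesis by (simp add: algebra_simps)
qed

lemma gen_diags_extend_two:
  assumes \<tau>: "\<tau> \<in> gen_diags X' Y'"
    and "i \<notin> X'" "i' \<notin> X'" "i \<noteq> i'" "a \<notin> Y'" "b \<notin> Y'" "a \<noteq> b"
  shows "\<tau>(i := a, i' := b) \<in> gen_diags (insert i (insert i' X')) (insert a (insert b Y'))"
proof -
  have \<tau>_bij: "bij_betw \<tau> X' Y'" and \<tau>_ext: "\<tau> \<in> X' \<rightarrow>\<^sub>E Y'"
    using \<tau> unfolding gen_diags_def by auto
  have "bij_betw (\<tau>(i := a, i' := b)) X' Y'"
    by (rule bij_betw_cong[THEN iffD1, OF _ \<tau>_bij]) (use assms in auto)
  moreover have "bij_betw (\<tau>(i := a, i' := b)) {i, i'} {a, b}"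
    using assms by (auto simp: bij_betw_def inj_on_def)
  ultimately have "bij_betw (\<tau>(i := a, i' := b)) (X' \<union> {i, i'}) (Y' \<union> {a, b})"
    using assms by (intro bij_betw_combine) auto
  moreover have "\<tau>(i := a, i' := b) \<in> insert i (insert i' X') \<rightarrow>\<^sub>E insert a (insert b Y')"
    using \<tau>_ext by (auto simp: PiE_def Pi_def extensional_def)
  ultimately show ?thesis
    unfolding gen_diags_def by (simp add: insert_commute Un_insert_right)
qed

text \<open>The key exchange argument: if (i,j) is large and (i,j'), (i',j) are small,
  the two extensions of a diagonal of the remaining rows and columns cannot both
  be good, since the first one has the large positions of the second plus (i,j).\<close>

lemma extensions_not_both_good:
  assumes "finite X'" "i \<notin> X'" "i' \<notin> X'" "i \<noteq> i'"
    and "(i, j) \<in> L" "(i, j') \<notin> L" "(i', j) \<notin> L"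
  defines "X \<equiv> insert i (insert i' X')"
  shows "\<not> good_diag L X (\<tau>(i := j, i' := j')) \<or> \<not> good_diag L X (\<tau>(i := j', i' := j))"
proof (rule ccontr)
  define S where "S = {x \<in> X'. (x, \<tau> x) \<in> L}"
  assume "\<not> ?thesis"
  then have good1: "card {x \<in> X. (x, (\<tau>(i := j, i' := j')) x) \<in> L} = 1"
    and good2: "card {x \<in> X. (x, (\<tau>(i := j', i' := j)) x) \<in> L} = 1"
    unfolding good_diag_def by auto
  have "{x \<in> X. (x, (\<tau>(i := j', i' := j)) x) \<in> L} = S"
    unfolding S_def X_def using assms by auto
  with good2 have "card (insert i S) = 2"
    using assms unfolding S_def by simp
  moreover have "card (insert i S) \<le> card {x \<in> X. (x, (\<tau>(i := j, i' := j')) x) \<in> L}"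
    by (rule card_mono) (use assms in \<open>auto simp: S_def X_def\<close>)
  ultimately show False using good1 by simp
qed

definition bad_diags :: "(nat \<times> nat) set \<Rightarrow> nat set \<Rightarrow> nat set \<Rightarrow> (nat \<Rightarrow> nat) set" where
  "bad_diags L X Y = {\<sigma> \<in> gen_diags X Y. \<not> good_diag L X \<sigma>}"

text \<open>If some row is large at (i,j), small at (i,j'), and some other row is small
  at (i',j), then there are at least (m-2)! bad diagonals: choosing a bad
  extension of each diagonal of (X - {i,i'}, Y - {j,j'}) is injective.\<close>

lemma card_bad_diags_exchange:
  assumes fin: "finite X" "finite Y" and cardXY: "card X = card Y"
    and ij: "i \<in> X" "j \<in> Y" "(i, j) \<in> L"
    and j': "j' \<in> Y" "(i, j') \<notin> L" and i': "i' \<in> X" "(i', j) \<notin> L"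
  shows "fact (card X - 2) \<le> card (bad_diags L X Y)"
proof -
  have "i \<noteq> i'" "j \<noteq> j'" using ij i' j' by auto
  define X' where "X' = X - {i, i'}"
  define Y' where "Y' = Y - {j, j'}"
  have X'_fresh: "i \<notin> X'" "i' \<notin> X'" and Y'_fresh: "j \<notin> Y'" "j' \<notin> Y'"
    unfolding X'_def Y'_def by auto
  have X: "X = insert i (insert i' X')" using ij i' unfolding X'_def by auto
  have Y: "Y = insert j (insert j' Y')" "Y = insert j' (insert j Y')"
    using ij j' unfolding Y'_def by auto
  have "card X' = card X - 2" "card Y' = card X - 2"
    unfolding X'_def Y'_def using fin ij i' j' \<open>i \<noteq> i'\<close> \<open>j \<noteq> j'\<close> cardXY
    by (simp_all add: card_Diff_subset)
  then have card_D': "card (gen_diags X' Y') = fact (card X - 2)"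
    using card_gen_diags[of X' Y'] fin unfolding X'_def Y'_def by simp
  define ext where "ext = (\<lambda>\<tau>. if good_diag L X (\<tau>(i := j, i' := j'))
                                 then \<tau>(i := j', i' := j) else \<tau>(i := j, i' := j'))"
  have "inj_on ext (gen_diags X' Y')"
  proof (rule inj_onI)
    fix \<tau>1 \<tau>2 assume \<tau>: "\<tau>1 \<in> gen_diags X' Y'" "\<tau>2 \<in> gen_diags X' Y'"
      and eq: "ext \<tau>1 = ext \<tau>2"
    have "\<tau>1 x = \<tau>2 x" for x
    proof (cases "x \<in> X'")
      case True
      then have "ext \<tau>1 x = \<tau>1 x" "ext \<tau>2 x = \<tau>2 x"
        using X'_fresh unfolding ext_def by auto
      then show ?thesis using eq by metis
    qed (use \<tau> in \<open>auto simp: gen_diags_def PiE_def extensional_def\<close>)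
    then show "\<tau>1 = \<tau>2" by blast
  qed
  moreover have "ext ` gen_diags X' Y' \<subseteq> bad_diags L X Y"
  proof
    fix \<sigma> assume "\<sigma> \<in> ext ` gen_diags X' Y'"
    then obtain \<tau> where \<tau>: "\<tau> \<in> gen_diags X' Y'" and \<sigma>: "\<sigma> = ext \<tau>" by auto
    have "\<tau>(i := j, i' := j') \<in> gen_diags X Y"
      using gen_diags_extend_two[OF \<tau> X'_fresh \<open>i \<noteq> i'\<close> Y'_fresh \<open>j \<noteq> j'\<close>] X Y(1) by simp
    moreover have "\<tau>(i := j', i' := j) \<in> gen_diags X Y"
      using gen_diags_extend_two[OF \<tau> X'_fresh \<open>i \<noteq> i'\<close> Y'_fresh(2,1)] \<open>j \<noteq> j'\<close> X Y(2)
      by simp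
    moreover have "finite X'" using fin unfolding X'_def by simp
    ultimately show "\<sigma> \<in> bad_diags L X Y"
      using extensions_not_both_good[of X' i i' j L j' \<tau>] X'_fresh \<open>i \<noteq> i'\<close> ij j' i'
      unfolding bad_diags_def \<sigma> ext_def X[symmetric] by auto
  qed
  moreover have "finite (bad_diags L X Y)"
    using finite_gen_diags[OF fin] unfolding bad_diags_def by simp
  ultimately show ?thesis using card_D' card_inj_on_le by metis
qed

text \<open>The lower bound for every restriction without a 0-strong line.  Without any
  large position every diagonal is bad; otherwise the exchange argument applies.\<close>

lemma card_bad_diags_no_strong_line:
  assumes fin: "finite X" "finite Y" and cardXY: "card X = card Y"
    and no_row: "\<not> (\<exists>i\<in>X. \<forall>j\<in>Y. (i, j) \<in> L)"
    and no_col: "\<not> (\<exists>j\<in>Y. \<forall>i\<in>X. (i, j) \<in> L)"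
  shows "fact (card X - 2) \<le> card (bad_diags L X Y)"
proof (cases "\<exists>i\<in>X. \<exists>j\<in>Y. (i, j) \<in> L")
  case True
  then obtain i j where ij: "i \<in> X" "j \<in> Y" "(i, j) \<in> L" by auto
  moreover obtain j' where "j' \<in> Y" "(i, j') \<notin> L" using no_row ij by auto
  moreover obtain i' where "i' \<in> X" "(i', j) \<notin> L" using no_col ij by auto
  ultimately show ?thesis using card_bad_diags_exchange fin cardXY by blast
next
  case False
  then have no_large: "{i \<in> X. (i, \<sigma> i) \<in> L} = {}" if "\<sigma> \<in> gen_diags X Y" for \<sigma>
    using that unfolding gen_diags_def by (auto simp: PiE_def Pi_def)
  have "\<not> good_diag L X \<sigma>" if "\<sigma> \<in> gen_diags X Y" for \<sigma>
    unfolding good_diag_def using no_large[OF that] by (metis card.empty zero_neq_one)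
  then have "bad_diags L X Y = gen_diags X Y"
    unfolding bad_diags_def by auto
  then show ?thesis
    using card_gen_diags[OF fin cardXY] by (simp add: fact_mono)
qed

lemma card_good_plus_bad_diags:
  assumes "finite (gen_diags X Y)"
  shows "card {\<sigma> \<in> gen_diags X Y. good_diag L X \<sigma>} + card (bad_diags L X Y)
         = card (gen_diags X Y)"
proof -
  have "gen_diags X Y = {\<sigma> \<in> gen_diags X Y. good_diag L X \<sigma>} \<union> bad_diags L X Y"
    "{\<sigma> \<in> gen_diags X Y. good_diag L X \<sigma>} \<inter> bad_diags L X Y = {}"
    unfolding bad_diags_def by auto
  then show ?thesis using assms by (metis card_Un_disjoint finite_Un)
qed

theorem lemma2p14:
  fixes n m :: nat and L :: "(nat \<times> nat) set" and X Y :: "nat set" and q :: real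
  assumes "L \<subseteq> {..<n} \<times> {..<n}"
    and "X \<subseteq> {..<n}" and "Y \<subseteq> {..<n}" and "card X = card Y"
    and "m = card X" and "m \<ge> 2"
    and "q_good L q X Y"
    and "q < 1 / (real m * (real m - 1))"
  shows "(\<exists>i\<in>X. \<forall>j\<in>Y. (i, j) \<in> L) \<or> (\<exists>j\<in>Y. \<forall>i\<in>X. (i, j) \<in> L)"
proof (rule ccontr)
  assume no_line: "\<not> ?thesis"
  have fin: "finite X" "finite Y" using assms(4-6) by (auto intro: card_ge_0_finite)
  define M where "M = real m * (real m - 1)"
  define f where "f = real (fact (m - 2))"
  have "M > 0" "f > 0" using assms(6) unfolding M_def f_def by auto
  have all: "real (card (gen_diags X Y)) = M * f"
    using card_gen_diags[OF fin assms(4)] fact_split_two[OF assms(6)] assms(5)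
    unfolding M_def f_def by simp
  have bad: "f \<le> real (card (bad_diags L X Y))"
    using card_bad_diags_no_strong_line[OF fin assms(4)] no_line assms(5)
    unfolding f_def by (metis of_nat_le_iff)
  have "1 - q \<le> real (card {\<sigma> \<in> gen_diags X Y. good_diag L X \<sigma>}) / (M * f)"
    using assms(7) all unfolding q_good_def by simp
  also have "\<dots> \<le> (M * f - f) / (M * f)"
  proof (intro divide_right_mono)
    show "real (card {\<sigma> \<in> gen_diags X Y. good_diag L X \<sigma>}) \<le> M * f - f"
      using card_good_plus_bad_diags[OF finite_gen_diags[OF fin], of L] all bad
      by (metis of_nat_add add_diff_cancel_right' diff_left_mono)
  qed (use \<open>M > 0\<close> \<open>f > 0\<close> in simp)
  also have "\<dots> = 1 - 1 / M" using \<open>M > 0\<close> \<open>f > 0\<close> by (simp add: field_simps)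
  finally show False using assms(8) unfolding M_def by simp
qed

end
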